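(* Let $\lambda,\xi\in\mathbb{C}$ with $\operatorname{Re}\lambda<0$ and $\operatorname{Re}\xi\ge1$, and let $f(z)=e^{-z+\lambda}+\xi$. Then the imaginary axis $\{z:\operatorname{Re}z=0\}$ does not intersect $I(f)$.
   Context: For an entire function $f$, $f^n$ denotes the $n$-th iterate and $I(f)=\{z\in\mathbb{C}: f^n(z)\to\infty\}$ is its escaping set. *)

theory Defs
  imports "HOL-Analysis.Analysis"
begin

definition escaping_set :: "(complex \<Rightarrow> complex) \<Rightarrow> complex set" where
  "escaping_set f = {z. filterlim (\<lambda>n. (f ^^ n) z) at_infinity sequentially}"

end

theory Submission
  imports Defs
begin

text \<open>For \<open>Re w \<ge> 0\<close> we have \<open>|exp (- w + \<lambda>)| = exp (Re \<lambda> - Re w) < 1\<close>, so \<open>f\<close> maps the closed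
  right half-plane into its intersection with the disc of radius \<open>1 + |\<xi>|\<close> (this is where
  \<open>Re \<xi> \<ge> 1\<close> enters). Hence every orbit starting on the imaginary axis stays bounded.\<close>

lemma not_in_escaping_set_if_bounded_orbit:
  assumes "bounded (range (\<lambda>n. (f ^^ n) z))"
  shows "z \<notin> escaping_set f"
proof
  assume "z \<in> escaping_set f"
  then have "filterlim (\<lambda>n. norm ((f ^^ n) z)) at_top sequentially"
    by (simp add: escaping_set_def filterlim_at_infinity_imp_norm_at_top)
  moreover obtain B where B: "\<And>n. norm ((f ^^ n) z) \<le> B"
    using assms by (auto simp: bounded_iff)
  ultimately obtain N where "\<And>n. n \<ge> N \<Longrightarrow> B < norm ((f ^^ n) z)"
    unfolding filterlim_at_top_dense eventually_sequentially by blast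
  then show False
    using B[of N] by fastforce
qed

lemma funpow_Suc_in_image:
  assumes "f ` S \<subseteq> S" "z \<in> S"
  shows "(f ^^ Suc n) z \<in> f ` S"
proof -
  have "(f ^^ n) z \<in> S"
    using assms by (induction n) auto
  then show ?thesis
    by simp
qed

lemma bounded_orbit_if_maps_into_bounded:
  assumes "f ` S \<subseteq> S" "bounded (f ` S)" "z \<in> S"
  shows "bounded (range (\<lambda>n. (f ^^ n) z))"
proof -
  have "(f ^^ n) z \<in> insert z (f ` S)" for n
    using funpow_Suc_in_image[OF assms(1,3)] by (cases n) auto
  then have "range (\<lambda>n. (f ^^ n) z) \<subseteq> insert z (f ` S)"
    by blast
  then show ?thesis
    using assms(2) bounded_insert bounded_subset by blast
qed

lemma exp_translate_maps_right_half_plane: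
  fixes lam xi w :: complex
  assumes "Re lam < 0" "Re xi \<ge> 1" "Re w \<ge> 0"
  shows "Re (exp (- w + lam) + xi) \<ge> 0" and "norm (exp (- w + lam) + xi) \<le> 1 + norm xi"
proof -
  have small: "norm (exp (- w + lam)) < 1"
    using assms by (simp add: norm_exp_eq_Re)
  then have "Re (exp (- w + lam)) > -1"
    using abs_Re_le_cmod[of "exp (- w + lam)"] by linarith
  then show "Re (exp (- w + lam) + xi) \<ge> 0"
    using assms(2) by simp
  show "norm (exp (- w + lam) + xi) \<le> 1 + norm xi"
    using norm_triangle_ineq[of "exp (- w + lam)" xi] small by linarith
qed

theorem lemma2:
  fixes lam xi :: complex
  assumes "Re lam < 0" and "Re xi \<ge> 1"
  shows "{z. Re z = 0} \<inter> escaping_set (\<lambda>z. exp (- z + lam) + xi) = {}"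
proof -
  let ?f = "\<lambda>z. exp (- z + lam) + xi"
  let ?H = "{w. Re w \<ge> 0}"
  have "?f ` ?H \<subseteq> ?H"
    using exp_translate_maps_right_half_plane(1)[OF assms] by auto
  moreover have "bounded (?f ` ?H)"
    using exp_translate_maps_right_half_plane(2)[OF assms]
    by (auto simp: bounded_iff)
  ultimately have "z \<notin> escaping_set ?f" if "Re z = 0" for z
    using that by (intro not_in_escaping_set_if_bounded_orbit bounded_orbit_if_maps_into_bounded) auto
  then show ?thesis
    by blast
qed

end
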